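(* Let $n$ be a positive integer with $\lambda^{3n/2}>2(1+\sqrt2)C_1$. Then $k_n>0$ and $$\frac{C_2}{2}\lambda^{n/2}<k_n^{1/2}<\frac{3C_2}{2}\lambda^{n/2}.$$
   Context: Standing setup: $p,q\in\mathbb{Z}$ are such that $x^3-px-q$ is irreducible over $\mathbb{Q}$ with exactly one real root $\theta$ (one has $3\theta^2-4p>0$ and $3\theta^2-p>0$). $K=\mathbb{Q}(\theta)\subset\mathbb{R}$, $\mathcal{O}_K$ its ring of integers. $d$ is a positive integer with $\mathcal{O}_K\subseteq\frac1d\mathbb{Z}[\theta]$. $\lambda\in\mathcal{O}_K$ is a unit with $\lambda>1$. For $n\ge1$ the rationals $a_n,b_n,c_n$ are defined by $a_n+b_n\theta+c_n\theta^2=\lambda^n$, and $X_n=a_n+pc_n-b_n\theta$, $Y_n=a_n+pc_n-c_n\theta^2$, $Z_n=b_n\theta-c_n\theta^2$, $k_n=dc_n$. Constants: $C_1=\max\{\sqrt2,\ \frac{\sqrt2|\theta|}{\sqrt{3\theta^2-4p}}\}$, $C_2=\frac{\sqrt d}{\sqrt{3\theta^2-p}}$. *)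

theory Defs
  imports "HOL-Analysis.Analysis" "HOL-Computational_Algebra.Computational_Algebra"
begin

definition cubic_field :: "real \<Rightarrow> real set" where
  "cubic_field \<theta> = {of_rat r0 + of_rat r1 * \<theta> + of_rat r2 * \<theta>^2 | r0 r1 r2. True}"

definition ring_of_integers :: "real \<Rightarrow> real set" where
  "ring_of_integers \<theta> = {x \<in> cubic_field \<theta>. algebraic_int x}"

definition scaled_order :: "nat \<Rightarrow> real \<Rightarrow> real set" where
  "scaled_order d \<theta> = {(of_int u + of_int v * \<theta> + of_int w * \<theta>^2) / real d | u v w. True}"

definition C1 :: "int \<Rightarrow> real \<Rightarrow> real" where
  "C1 p \<theta> = max (sqrt 2) (sqrt 2 * \<bar>\<theta>\<bar> / sqrt (3 * \<theta>^2 - 4 * of_int p))"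

definition C2 :: "int \<Rightarrow> nat \<Rightarrow> real \<Rightarrow> real" where
  "C2 p d \<theta> = sqrt (real d) / sqrt (3 * \<theta>^2 - of_int p)"

end

(*
  Write elements of K in the basis 1, \<theta>, \<theta>\<^sup>2 and let \<sigma> be the complex embedding sending \<theta>
  to a non-real root of x\<^sup>3 - p x - q.  The norm x |\<sigma> x|\<^sup>2 of an element of O_K is a rational
  integer, so a unit \<lambda> > 1 has |\<sigma> \<lambda>|\<^sup>2 = 1/\<lambda>, and \<Lambda> = \<lambda>\<^sup>n has a conjugate of size \<Lambda>^(-1/2).
  An explicit identity shows that the deviation of c\<^sub>n (3\<theta>\<^sup>2 - p) from \<Lambda> is controlled by
  |\<sigma> \<Lambda>|\<^sup>2: (3\<theta>\<^sup>2 - 4p)(c\<^sub>n (3\<theta>\<^sup>2 - p) - \<Lambda>)\<^sup>2 \<le> 4 (3\<theta>\<^sup>2 - p) / \<Lambda>.  Once \<Lambda>\<^sup>3 is large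
  compared with C1\<^sup>2 this pins c\<^sub>n (3\<theta>\<^sup>2 - p) between \<Lambda>/4 and 7\<Lambda>/4, and taking square roots gives
  the bounds with C2 = sqrt (d / (3\<theta>\<^sup>2 - p)).
*)

theory Submission
  imports Defs "HOL-Computational_Algebra.Field_as_Ring"
begin

lemma map_poly_of_rat_add:
  "map_poly (of_rat :: rat \<Rightarrow> 'a::field_char_0) (f + g) = map_poly of_rat f + map_poly of_rat g"
  by (rule poly_eqI) (simp add: coeff_map_poly of_rat_add)

lemma map_poly_of_rat_mult:
  "map_poly (of_rat :: rat \<Rightarrow> 'a::field_char_0) (f * g) = map_poly of_rat f * map_poly of_rat g"
  by (rule poly_eqI) (simp add: coeff_map_poly coeff_mult of_rat_sum of_rat_mult)

lemma irreducible_dvd_if_common_root: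
  fixes g f :: "rat poly" and t :: "'a::field_char_0"
  assumes "irreducible g"
    and "poly (map_poly of_rat g) t = 0" and "poly (map_poly of_rat f) t = 0"
  shows "g dvd f"
proof (rule ccontr)
  assume "\<not> g dvd f"
  with \<open>irreducible g\<close> have "coprime g f"
    by (meson dvd_trans irreducibleD' not_coprimeE)
  then have "fst (bezout_coefficients g f) * g + snd (bezout_coefficients g f) * f = 1"
    by (simp add: bezout_coefficients_fst_snd)
  then have "poly (map_poly of_rat (fst (bezout_coefficients g f) * g + snd (bezout_coefficients g f) * f)) t = (1::'a)"
    by simp
  with assms(2,3) show False
    by (simp add: map_poly_of_rat_add map_poly_of_rat_mult)
qed

lemma sum_mem_closed:
  assumes "finite A" and "0 \<in> S" and "\<And>a b. a \<in> S \<Longrightarrow> b \<in> S \<Longrightarrow> a + b \<in> S"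
    and "\<And>i. i \<in> A \<Longrightarrow> f i \<in> S"
  shows "sum f A \<in> S"
  using assms by (induction A rule: finite_induct) auto

lemma scaled_power_mem_if_integral:
  fixes S :: "'a::comm_ring_1 set" and P :: "'a poly"
  assumes add: "\<And>a b. a \<in> S \<Longrightarrow> b \<in> S \<Longrightarrow> a + b \<in> S"
    and mult: "\<And>a b. a \<in> S \<Longrightarrow> b \<in> S \<Longrightarrow> a * b \<in> S"
    and ints: "\<And>k. of_int k \<in> S"
    and "e \<in> S" and "e * y \<in> S"
    and monic: "lead_coeff P = 1" and coeffs: "\<And>i. coeff P i \<in> \<int>" and root: "poly P y = 0"
  shows "e ^ degree P * y ^ k \<in> S"
proof (induction k rule: less_induct)
  case (less k)
  define m where "m = degree P"
  have power_mem: "a ^ n \<in> S" if "a \<in> S" for a n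
    using that ints[of 1] mult by (induction n) auto
  show ?case
  proof (cases "k < m")
    case True
    then have "e ^ m = e ^ (m - k) * e ^ k"
      by (simp flip: power_add)
    then have "e ^ m * y ^ k = e ^ (m - k) * (e * y) ^ k"
      by (simp add: power_mult_distrib)
    with power_mem[OF \<open>e \<in> S\<close>] power_mem[OF \<open>e * y \<in> S\<close>] mult show ?thesis
      by (simp add: m_def)
  next
    case False
    have "0 = (\<Sum>i<m. coeff P i * y ^ i) + y ^ m"
      using root monic by (simp add: m_def poly_altdef lessThan_Suc_atMost[symmetric])
    then have y_m: "y ^ m = - (\<Sum>i<m. coeff P i * y ^ i)"
      by (simp add: eq_neg_iff_add_eq_0 add.commute)
    from False have "e ^ m * y ^ k = e ^ m * y ^ (k - m) * y ^ m"
      by (simp add: mult.assoc flip: power_add)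
    also have "\<dots> = (\<Sum>i<m. (- coeff P i) * (e ^ m * y ^ (k - m + i)))"
      by (simp add: y_m sum_distrib_left power_add sum_negf mult_ac)
    also have "\<dots> \<in> S"
    proof (rule sum_mem_closed)
      fix i assume "i \<in> {..<m}"
      then have "e ^ m * y ^ (k - m + i) \<in> S"
        using False by (intro less[unfolded m_def[symmetric]]) auto
      moreover obtain c where "coeff P i = of_int c"
        using coeffs[of i] by (auto elim: Ints_cases)
      ultimately show "(- coeff P i) * (e ^ m * y ^ (k - m + i)) \<in> S"
        using ints[of "- c"] mult by fastforce
    qed (use add ints[of 0] in auto)
    finally show ?thesis
      by (simp add: m_def)
  qed
qed

lemma rat_in_Ints_if_bounded_denominators:
  fixes r :: rat
  assumes "E > 0" and "\<And>k. of_nat E * r ^ k \<in> \<int>"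
  shows "r \<in> \<int>"
proof -
  obtain a b where q: "quotient_of r = (a, b)"
    by (cases "quotient_of r")
  have b_pos: "b > 0" and r_eq: "r = of_int a / of_int b" and "coprime a b"
    using quotient_of_denom_pos[OF q] quotient_of_div[OF q] quotient_of_coprime[OF q] by auto
  have b_pow_le: "b ^ k \<le> int E" for k
  proof -
    obtain z where "of_nat E * r ^ k = of_int z"
      using assms(2)[of k] by (auto elim: Ints_cases)
    then have "of_nat E * of_int a ^ k = (of_int (z * b ^ k) :: rat)"
      using b_pos unfolding r_eq by (simp add: field_simps)
    then have "b ^ k dvd int E * a ^ k"
      by (metis dvd_triv_right of_int_eq_iff of_int_mult of_int_of_nat_eq of_int_power)
    moreover have "coprime (b ^ k) (a ^ k)"
      using \<open>coprime a b\<close> by (simp add: coprime_commute)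
    ultimately have "b ^ k dvd int E"
      by (metis coprime_dvd_mult_left_iff mult.commute)
    with \<open>E > 0\<close> show ?thesis
      by (simp add: zdvd_imp_le)
  qed
  have "b = 1"
  proof (rule ccontr)
    assume "b \<noteq> 1"
    with b_pos have "(2::int) ^ E \<le> b ^ E"
      by (intro power_mono) auto
    moreover have "int E < 2 ^ E"
      using less_exp[of E] by (metis of_nat_less_iff of_nat_numeral of_nat_power)
    ultimately show False
      using b_pow_le[of E] by simp
  qed
  with r_eq show ?thesis
    by simp
qed

text \<open>
  Elements of \<open>\<rat>(t)\<close> for a root \<open>t\<close> of \<open>x\<^sup>3 - p x - q\<close>, in coordinates with respect to
  \<open>1, t, t\<^sup>2\<close>: \<open>coord_mult\<close> is multiplication in \<open>\<rat>[x]/(x\<^sup>3 - p x - q)\<close>, and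
  \<open>norm_form\<close> is the field norm as a ternary cubic form.
\<close>

definition coord_eval :: "'a::field_char_0 \<Rightarrow> rat \<times> rat \<times> rat \<Rightarrow> 'a" where
  "coord_eval t = (\<lambda>(u, v, w). of_rat u + of_rat v * t + of_rat w * t^2)"

definition coord_mult :: "rat \<Rightarrow> rat \<Rightarrow> rat \<times> rat \<times> rat \<Rightarrow> rat \<times> rat \<times> rat \<Rightarrow> rat \<times> rat \<times> rat" where
  "coord_mult p q = (\<lambda>(x0, x1, x2) (y0, y1, y2).
     (x0 * y0 + q * (x1 * y2 + x2 * y1),
      x0 * y1 + x1 * y0 + p * (x1 * y2 + x2 * y1) + q * x2 * y2,
      x0 * y2 + x1 * y1 + x2 * y0 + p * x2 * y2))"

primrec coord_pow :: "rat \<Rightarrow> rat \<Rightarrow> rat \<times> rat \<times> rat \<Rightarrow> nat \<Rightarrow> rat \<times> rat \<times> rat" where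
  "coord_pow p q x 0 = (1, 0, 0)"
| "coord_pow p q x (Suc n) = coord_mult p q x (coord_pow p q x n)"

definition integral_coords :: "rat \<times> rat \<times> rat \<Rightarrow> bool" where
  "integral_coords = (\<lambda>(u, v, w). u \<in> \<int> \<and> v \<in> \<int> \<and> w \<in> \<int>)"

definition norm_form :: "rat \<Rightarrow> rat \<Rightarrow> rat \<times> rat \<times> rat \<Rightarrow> rat" where
  "norm_form p q = (\<lambda>(u, v, w).
     u^3 + 2 * u^2 * w * p + u * w^2 * p^2 - u * v^2 * p - 3 * u * v * w * q
     + v^3 * q + w^3 * q^2 - p * q * v * w^2)"

lemma of_rat_complex: "(of_rat r :: complex) = of_real (of_rat r)"
  by (cases r) (simp add: of_rat_rat)

lemma coord_eval_simps [simp]: "coord_eval t (u, v, w) = of_rat u + of_rat v * t + of_rat w * t^2"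
  by (simp add: coord_eval_def)

lemma coord_mult_simps [simp]:
  "coord_mult p q (x0, x1, x2) (y0, y1, y2) =
     (x0 * y0 + q * (x1 * y2 + x2 * y1),
      x0 * y1 + x1 * y0 + p * (x1 * y2 + x2 * y1) + q * x2 * y2,
      x0 * y2 + x1 * y1 + x2 * y0 + p * x2 * y2)"
  by (simp add: coord_mult_def)

lemma integral_coords_simps [simp]: "integral_coords (u, v, w) \<longleftrightarrow> u \<in> \<int> \<and> v \<in> \<int> \<and> w \<in> \<int>"
  by (simp add: integral_coords_def)

lemma norm_form_const [simp]: "norm_form p q (c, 0, 0) = c^3"
  by (simp add: norm_form_def)

lemma coord_eval_mult:
  fixes t :: "'a::field_char_0"
  assumes "t^3 = of_rat p * t + of_rat q"
  shows "coord_eval t (coord_mult p q x y) = coord_eval t x * coord_eval t y"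
proof -
  obtain x0 x1 x2 y0 y1 y2 where xy: "x = (x0, x1, x2)" "y = (y0, y1, y2)"
    by (cases x, cases y) auto
  show ?thesis
    using assms unfolding xy by (simp add: of_rat_add of_rat_mult) algebra
qed

lemma coord_eval_pow:
  fixes t :: "'a::field_char_0"
  assumes "t^3 = of_rat p * t + of_rat q"
  shows "coord_eval t (coord_pow p q x n) = coord_eval t x ^ n"
  by (induction n) (simp_all add: coord_eval_mult[OF assms])

lemma integral_coords_mult:
  "p \<in> \<int> \<Longrightarrow> q \<in> \<int> \<Longrightarrow> integral_coords x \<Longrightarrow> integral_coords y \<Longrightarrow>
     integral_coords (coord_mult p q x y)"
  by (cases x; cases y) auto

lemma norm_form_in_Ints:
  "p \<in> \<int> \<Longrightarrow> q \<in> \<int> \<Longrightarrow> integral_coords x \<Longrightarrow> norm_form p q x \<in> \<int>"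
  by (cases x) (auto simp: norm_form_def)

lemma cubic_field_coords:
  assumes "y \<in> cubic_field \<theta>"
  obtains x where "coord_eval \<theta> x = y"
proof -
  from assms obtain r0 r1 r2 where "y = of_rat r0 + of_rat r1 * \<theta> + of_rat r2 * \<theta>^2"
    unfolding cubic_field_def by blast
  with that[of "(r0, r1, r2)"] show ?thesis
    by simp
qed

lemma norm_form_factorization:
  fixes t :: real
  assumes "t^3 = of_rat p * t + of_rat q"
  shows "coord_eval t (u, v, w) *
      ((of_rat u - of_rat v * t / 2 + of_rat w * (of_rat p - t^2 / 2))^2
       + (3 * t^2 - 4 * of_rat p) / 4 * (of_rat v - of_rat w * t)^2)
    = of_rat (norm_form p q (u, v, w))"
  using assms unfolding norm_form_def coord_eval_simps
  by (simp only: of_rat_add of_rat_diff of_rat_mult of_rat_power of_rat_numeral_eq prod.case) algebra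

text \<open>
  With \<open>A + B t + C t\<^sup>2\<close> the value at the real root and the squared bracket the value of
  \<open>|\<sigma>(A + B t + C t\<^sup>2)|\<^sup>2\<close>, this bounds the deviation of the last coordinate by the conjugate.
\<close>

lemma conj_norm_defect_identity:
  fixes t P A B C :: real
  shows "4 * (3*t^2 - P) * ((A - B*t/2 + C*(P - t^2/2))^2 + (3*t^2 - 4*P)/4 * (B - C*t)^2)
       - (3*t^2 - 4*P) * (C * (3*t^2 - P) - (A + B*t + C*t^2))^2
     = (3*t*(A - B*t/2 + C*(P - t^2/2)) - (3*t^2 - 4*P) * (B - C*t)/2)^2"
  by algebra

lemma C1_sq_bound:
  fixes \<theta> :: real and p :: int
  assumes "3 * \<theta>^2 - 4 * of_int p > 0"
  shows "2 * (3 * \<theta>^2 - of_int p) \<le> 3 * ((3 * \<theta>^2 - 4 * of_int p) * (C1 p \<theta>)^2)"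
proof -
  define E where "E = 3 * \<theta>^2 - 4 * of_int p"
  have "E > 0"
    using assms unfolding E_def .
  have "sqrt 2 \<le> C1 p \<theta>" and "sqrt 2 * \<bar>\<theta>\<bar> / sqrt E \<le> C1 p \<theta>"
    unfolding C1_def E_def by simp_all
  then have "(sqrt 2)^2 \<le> (C1 p \<theta>)^2" and "(sqrt 2 * \<bar>\<theta>\<bar> / sqrt E)^2 \<le> (C1 p \<theta>)^2"
    using \<open>E > 0\<close> by (intro power_mono; simp)+
  with \<open>E > 0\<close> have "2 * E \<le> E * (C1 p \<theta>)^2" and "2 * \<theta>^2 \<le> E * (C1 p \<theta>)^2"
    by (simp_all add: power_divide power_mult_distrib field_simps)
  moreover have "3 * \<theta>^2 = E + 4 * of_int p" and "0 \<le> \<theta>^2"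
    unfolding E_def by simp_all
  ultimately have "2 * (3 * \<theta>^2 - of_int p) \<le> 3 * (E * (C1 p \<theta>)^2)"
    by argo
  then show ?thesis
    unfolding E_def .
qed

lemma last_coord_close_to_value:
  fixes \<theta> A B C \<Lambda> :: real and p :: int
  assumes E_pos: "3 * \<theta>^2 - 4 * of_int p > 0" and "\<Lambda> > 0"
    and \<Lambda>_eq: "\<Lambda> = A + B * \<theta> + C * \<theta>^2"
    and conj_norm: "(A - B * \<theta> / 2 + C * (of_int p - \<theta>^2 / 2))^2
        + (3 * \<theta>^2 - 4 * of_int p) / 4 * (B - C * \<theta>)^2 = 1 / \<Lambda>"
    and large: "16 * (C1 p \<theta>)^2 < \<Lambda>^3"
  shows "\<bar>C * (3 * \<theta>^2 - of_int p) - \<Lambda>\<bar> < 3 / 4 * \<Lambda>"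
proof -
  define E where "E = 3 * \<theta>^2 - 4 * of_int p"
  define D where "D = 3 * \<theta>^2 - of_int p"
  have "E > 0"
    using E_pos unfolding E_def .
  have "4 * D * (1 / \<Lambda>) - E * (C * D - \<Lambda>)^2
      = (3 * \<theta> * (A - B * \<theta> / 2 + C * (of_int p - \<theta>^2 / 2)) - E * (B - C * \<theta>) / 2)^2"
    using conj_norm_defect_identity[of \<theta> "of_int p" A B C] unfolding conj_norm \<Lambda>_eq[symmetric] E_def D_def .
  then have "0 \<le> 4 * D * (1 / \<Lambda>) - E * (C * D - \<Lambda>)^2"
    by simp
  then have "E * (C * D - \<Lambda>)^2 \<le> 4 * D * (1 / \<Lambda>)"
    by linarith
  from mult_right_mono[OF this, of \<Lambda>] \<open>\<Lambda> > 0\<close>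
  have "(C * D - \<Lambda>)^2 * (E * \<Lambda>) \<le> 4 * D"
    by (simp add: mult_ac)
  also have "4 * D < (3 / 4 * \<Lambda>)^2 * (E * \<Lambda>)"
  proof -
    have "2 * D \<le> 3 * (E * (C1 p \<theta>)^2)"
      using C1_sq_bound[OF E_pos] unfolding E_def D_def .
    moreover have "E * (C1 p \<theta>)^2 < E * (\<Lambda>^3 / 16)"
      using large \<open>E > 0\<close> by (intro mult_strict_left_mono) simp_all
    moreover have "(3 / 4 * \<Lambda>)^2 * (E * \<Lambda>) = 9 / 16 * (E * \<Lambda>^3)"
      by (simp add: power2_eq_square power3_eq_cube)
    moreover have "0 < E * \<Lambda>^3"
      using \<open>E > 0\<close> \<open>\<Lambda> > 0\<close> by simp
    ultimately show ?thesis
      by linarith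
  qed
  finally have "(C * D - \<Lambda>)^2 < (3 / 4 * \<Lambda>)^2"
    using \<open>E > 0\<close> \<open>\<Lambda> > 0\<close> by (simp add: mult_less_cancel_right_pos)
  then have "\<bar>C * D - \<Lambda>\<bar>^2 < (3 / 4 * \<Lambda>)^2"
    by (simp only: power2_abs)
  then show ?thesis
    unfolding D_def by (rule power2_less_imp_less) (use \<open>\<Lambda> > 0\<close> in simp)
qed

lemma sqrt_last_coord_bounds:
  fixes \<theta> C \<Lambda> t :: real and p :: int and d :: nat
  assumes "d > 0" and E_pos: "3 * \<theta>^2 - 4 * of_int p > 0" and "t > 0" and "t^2 = \<Lambda>"
    and close: "\<bar>C * (3 * \<theta>^2 - of_int p) - \<Lambda>\<bar> < 3 / 4 * \<Lambda>"
  shows "real d * C > 0 \<and> C2 p d \<theta> / 2 * t < sqrt (real d * C)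
    \<and> sqrt (real d * C) < 3 * C2 p d \<theta> / 2 * t"
proof -
  define D where "D = 3 * \<theta>^2 - of_int p"
  have "D > 0"
    using E_pos zero_le_power2[of \<theta>] unfolding D_def by linarith
  from close have lower: "\<Lambda> < 4 * (C * D)" and upper: "4 * (C * D) < 7 * \<Lambda>"
    unfolding D_def abs_less_iff by linarith+
  moreover have "\<Lambda> > 0"
    using \<open>t > 0\<close> \<open>t^2 = \<Lambda>\<close> by auto
  ultimately have "C * D > 0"
    by simp
  with \<open>D > 0\<close> have "C > 0"
    by (simp add: zero_less_mult_iff)
  with \<open>d > 0\<close> have "real d * C > 0"
    by simp
  have C2_sq: "(C2 p d \<theta> / 2 * t)^2 = real d * \<Lambda> / (4 * D)"
    using \<open>D > 0\<close> \<open>t^2 = \<Lambda>\<close> unfolding C2_def D_def by (simp add: power_divide power_mult_distrib)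
  have "(C2 p d \<theta> / 2 * t)^2 < real d * C"
    unfolding C2_sq using lower \<open>d > 0\<close> \<open>D > 0\<close> by (simp add: field_simps)
  then have "C2 p d \<theta> / 2 * t < sqrt (real d * C)"
    by (rule real_less_rsqrt)
  moreover have "real d * C < (3 * (C2 p d \<theta> / 2 * t))^2"
    unfolding power_mult_distrib[of 3] C2_sq using upper \<open>\<Lambda> > 0\<close> \<open>d > 0\<close> \<open>D > 0\<close>
    by (simp add: field_simps)
  then have "sqrt (real d * C) < 3 * (C2 p d \<theta> / 2 * t)"
    using \<open>real d * C > 0\<close> \<open>t > 0\<close> \<open>D > 0\<close>
    by (intro real_less_lsqrt) (simp_all add: C2_def D_def)
  then have "sqrt (real d * C) < 3 * C2 p d \<theta> / 2 * t"
    by (simp add: algebra_simps)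
  ultimately show ?thesis
    using \<open>real d * C > 0\<close> by simp
qed

locale real_cubic =
  fixes p q :: int and \<theta> :: real
  assumes irreducible_cubic: "irreducible ([:- of_int q, - of_int p, 0, 1:] :: rat poly)"
    and cubic_root: "\<theta>^3 - of_int p * \<theta> - of_int q = 0"
    and unique_real_root: "\<forall>x::real. x^3 - of_int p * x - of_int q = 0 \<longrightarrow> x = \<theta>"
begin

lemma theta_cubed: "\<theta>^3 = of_rat (of_int p) * \<theta> + of_rat (of_int q)"
  using cubic_root by simp

lemma cubic_poly_root: "poly (map_poly of_rat [:- of_int q, - of_int p, 0, 1:]) \<theta> = 0"
  using cubic_root by (simp add: map_poly_pCons of_rat_minus algebra_simps power3_eq_cube)

lemma coord_eval_inject:
  assumes "coord_eval \<theta> x = coord_eval \<theta> y"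
  shows "x = y"
proof -
  obtain x0 x1 x2 y0 y1 y2 where xy: "x = (x0, x1, x2)" "y = (y0, y1, y2)"
    by (cases x, cases y) auto
  define f where "f = [:x0 - y0, x1 - y1, x2 - y2:]"
  have "poly (map_poly of_rat f) \<theta> = coord_eval \<theta> x - coord_eval \<theta> y"
    unfolding f_def xy by (simp add: map_poly_pCons of_rat_diff algebra_simps power2_eq_square)
  with assms have "[:- of_int q, - of_int p, 0, 1:] dvd f"
    by (intro irreducible_dvd_if_common_root[OF irreducible_cubic cubic_poly_root]) simp
  moreover have "degree f < 3"
    unfolding f_def by simp
  moreover have "degree ([:- of_int q, - of_int p, 0, 1:] :: rat poly) = 3"
    by simp
  ultimately have "f = 0"
    using dvd_imp_degree_le by (metis not_less)
  then show ?thesis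
    unfolding f_def xy by simp
qed

lemma theta_nonzero: "\<theta> \<noteq> 0"
  using coord_eval_inject[of "(0, 1, 0)" "(0, 0, 0)"] by auto

lemma discriminant_pos: "3 * \<theta>^2 - 4 * of_int p > 0"
proof (rule ccontr)
  assume "\<not> 3 * \<theta>^2 - 4 * of_int p > 0"
  define r where "r = sqrt (4 * of_int p - 3 * \<theta>^2)"
  have r2: "r^2 = 4 * of_int p - 3 * \<theta>^2"
    using \<open>\<not> 3 * \<theta>^2 - 4 * of_int p > 0\<close> unfolding r_def by simp
  have root_eq_theta: "x = \<theta>" if "x = (- \<theta> + r) / 2 \<or> x = (- \<theta> - r) / 2" for x
  proof -
    from that have "2 * x + \<theta> = r \<or> 2 * x + \<theta> = - r"
      by auto
    then have "(2 * x + \<theta>)^2 = r^2"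
      by auto
    with r2 have "x^2 + \<theta> * x + \<theta>^2 - of_int p = 0"
      by (simp add: power2_eq_square algebra_simps)
    with cubic_root have "x^3 - of_int p * x - of_int q = 0"
      by algebra
    with unique_real_root show ?thesis
      by blast
  qed
  from root_eq_theta[of "(- \<theta> + r) / 2"] root_eq_theta[of "(- \<theta> - r) / 2"] have "\<theta> = 0"
    by simp
  with theta_nonzero show False ..
qed

text \<open>The two non-real roots of the cubic are \<open>conj_root\<close> and its complex conjugate.\<close>

definition conj_root :: complex where
  "conj_root = Complex (- \<theta> / 2) (sqrt (3 * \<theta>^2 - 4 * of_int p) / 2)"

lemma conj_root_sq: "conj_root^2 = Complex (of_int p - \<theta>^2 / 2) (- \<theta> * sqrt (3 * \<theta>^2 - 4 * of_int p) / 2)"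
  using discriminant_pos unfolding conj_root_def
  by (simp add: complex_eq_iff power2_eq_square field_simps)

lemma conj_root_cubed: "conj_root^3 = of_rat (of_int p) * conj_root + of_rat (of_int q)"
proof -
  have "conj_root^2 + of_real \<theta> * conj_root + of_real (\<theta>^2 - of_int p) = 0"
    unfolding conj_root_sq by (simp add: conj_root_def complex_eq_iff power2_eq_square)
  moreover have "(of_real \<theta>)^3 - of_int p * of_real \<theta> - of_int q = (0::complex)"
    using arg_cong[OF cubic_root, of complex_of_real] by simp
  ultimately have "conj_root^3 - of_int p * conj_root - of_int q = 0"
    by (simp add: of_real_diff) algebra
  then show ?thesis
    by (simp add: algebra_simps)
qed

lemma coord_eval_conj_root:
  "coord_eval conj_root (u, v, w) =
     Complex (of_rat u - of_rat v * \<theta> / 2 + of_rat w * (of_int p - \<theta>^2 / 2))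
             (sqrt (3 * \<theta>^2 - 4 * of_int p) / 2 * (of_rat v - of_rat w * \<theta>))"
  unfolding coord_eval_simps conj_root_sq
  by (simp add: complex_eq_iff conj_root_def field_simps of_rat_complex)

lemma norm_form_eq:
  "coord_eval \<theta> x * (cmod (coord_eval conj_root x))^2 = of_rat (norm_form (of_int p) (of_int q) x)"
proof -
  obtain u v w where x: "x = (u, v, w)"
    by (cases x) auto
  have "(sqrt (3 * \<theta>^2 - 4 * of_int p))^2 = 3 * \<theta>^2 - 4 * of_int p"
    using discriminant_pos by simp
  then have cmod_sq: "(cmod (coord_eval conj_root x))^2 =
      (of_rat u - of_rat v * \<theta> / 2 + of_rat w * (of_int p - \<theta>^2 / 2))^2
      + (3 * \<theta>^2 - 4 * of_int p) / 4 * (of_rat v - of_rat w * \<theta>)^2"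
    unfolding x coord_eval_conj_root cmod_power2 by (simp add: power_mult_distrib power_divide)
  from norm_form_factorization[OF theta_cubed, of u v w] show ?thesis
    unfolding cmod_sq unfolding x of_rat_of_int_eq .
qed

lemma norm_form_mult:
  "norm_form (of_int p) (of_int q) (coord_mult (of_int p) (of_int q) x y) =
     norm_form (of_int p) (of_int q) x * norm_form (of_int p) (of_int q) y"
proof -
  have "(of_rat (norm_form (of_int p) (of_int q) (coord_mult (of_int p) (of_int q) x y)) :: real) =
      (coord_eval \<theta> x * (cmod (coord_eval conj_root x))^2) * (coord_eval \<theta> y * (cmod (coord_eval conj_root y))^2)"
    by (simp add: norm_form_eq[symmetric] coord_eval_mult[OF theta_cubed]
        coord_eval_mult[OF conj_root_cubed] norm_mult power_mult_distrib mult_ac)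
  also have "\<dots> = of_rat (norm_form (of_int p) (of_int q) x * norm_form (of_int p) (of_int q) y)"
    by (simp only: norm_form_eq of_rat_mult)
  finally show ?thesis
    by (simp only: of_rat_eq_iff)
qed

lemma norm_form_pow:
  "norm_form (of_int p) (of_int q) (coord_pow (of_int p) (of_int q) x k) = norm_form (of_int p) (of_int q) x ^ k"
  by (induction k) (simp_all add: norm_form_mult)

definition Z_theta :: "real set" where
  "Z_theta = {coord_eval \<theta> z | z. integral_coords z}"

lemma Z_theta_add:
  assumes "a \<in> Z_theta" and "b \<in> Z_theta"
  shows "a + b \<in> Z_theta"
proof -
  obtain u v w u' v' w' where
    "a = coord_eval \<theta> (u, v, w)" "integral_coords (u, v, w)"
    "b = coord_eval \<theta> (u', v', w')" "integral_coords (u', v', w')"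
    using assms unfolding Z_theta_def by auto
  then have "a + b = coord_eval \<theta> (u + u', v + v', w + w')" "integral_coords (u + u', v + v', w + w')"
    by (simp_all add: of_rat_add algebra_simps)
  then show ?thesis
    unfolding Z_theta_def by blast
qed

lemma Z_theta_mult:
  assumes "a \<in> Z_theta" and "b \<in> Z_theta"
  shows "a * b \<in> Z_theta"
proof -
  obtain x y where "a = coord_eval \<theta> x" "integral_coords x" "b = coord_eval \<theta> y" "integral_coords y"
    using assms unfolding Z_theta_def by auto
  then have "a * b = coord_eval \<theta> (coord_mult (of_int p) (of_int q) x y)"
    and "integral_coords (coord_mult (of_int p) (of_int q) x y)"
    by (simp_all add: coord_eval_mult[OF theta_cubed] integral_coords_mult)
  then show ?thesis
    unfolding Z_theta_def by blast
qed

lemma Z_theta_of_int: "of_int k \<in> Z_theta"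
  unfolding Z_theta_def by (intro CollectI exI[of _ "(of_int k, 0, 0)"]) simp

lemma norm_form_in_Ints_if_algebraic_int:
  assumes "d > 0" and "ring_of_integers \<theta> \<subseteq> scaled_order d \<theta>"
    and "coord_eval \<theta> x \<in> ring_of_integers \<theta>"
  shows "norm_form (of_int p) (of_int q) x \<in> \<int>"
proof -
  let ?N = "norm_form (of_int p) (of_int q)" and ?y = "coord_eval \<theta> x"
  obtain P where P: "lead_coeff P = 1" "\<And>i. coeff P i \<in> \<int>" "poly P ?y = 0"
    using assms(3) unfolding ring_of_integers_def by (auto elim: algebraic_int.cases)
  define m where "m = degree P"
  txt \<open>Bounded denominators: \<open>d^m y^k \<in> \<int>[\<theta>]\<close> for all \<open>k\<close>, hence \<open>d^(3m) N(y)^k \<in> \<int>\<close>.\<close>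
  have "of_nat d * ?y \<in> Z_theta"
  proof -
    have "?y \<in> scaled_order d \<theta>"
      using assms(2,3) by blast
    then obtain u v w :: int where "?y = (of_int u + of_int v * \<theta> + of_int w * \<theta>^2) / real d"
      unfolding scaled_order_def by blast
    with \<open>d > 0\<close> have "of_nat d * ?y = coord_eval \<theta> (of_int u, of_int v, of_int w)"
      by simp
    then show ?thesis
      unfolding Z_theta_def by fastforce
  qed
  then have "of_nat d ^ m * ?y ^ k \<in> Z_theta" for k
    unfolding m_def
    by (intro scaled_power_mem_if_integral[OF Z_theta_add Z_theta_mult Z_theta_of_int _ _ P])
      (simp_all add: Z_theta_of_int[of "int d", simplified])
  have bounded: "of_nat (d ^ (3 * m)) * ?N x ^ k \<in> \<int>" for k
  proof -
    let ?z = "coord_mult (of_int p) (of_int q) (of_nat (d ^ m), 0, 0) (coord_pow (of_int p) (of_int q) x k)"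
    obtain z where z: "integral_coords z" "coord_eval \<theta> z = of_nat d ^ m * ?y ^ k"
      using \<open>of_nat d ^ m * ?y ^ k \<in> Z_theta\<close> unfolding Z_theta_def by auto
    have "coord_eval \<theta> ?z = of_nat d ^ m * ?y ^ k"
      by (simp add: coord_eval_mult[OF theta_cubed] coord_eval_pow[OF theta_cubed] of_rat_power)
    with z have "z = ?z"
      by (intro coord_eval_inject) simp
    then have "?N z = of_nat (d ^ (3 * m)) * ?N x ^ k"
      by (simp add: norm_form_mult norm_form_pow power_mult mult.commute)
    moreover have "?N z \<in> \<int>"
      using z(1) by (intro norm_form_in_Ints) auto
    ultimately show ?thesis
      by (simp only:)
  qed
  show ?thesis
    by (rule rat_in_Ints_if_bounded_denominators[OF _ bounded]) (use \<open>d > 0\<close> in simp)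
qed

lemma unit_conj_norm:
  assumes "d > 0" and "ring_of_integers \<theta> \<subseteq> scaled_order d \<theta>"
    and "coord_eval \<theta> x \<in> ring_of_integers \<theta>" and "inverse (coord_eval \<theta> x) \<in> ring_of_integers \<theta>"
    and "coord_eval \<theta> x > 0"
  shows "coord_eval \<theta> x * (cmod (coord_eval conj_root x))^2 = 1"
proof -
  let ?N = "norm_form (of_int p) (of_int q)"
  obtain y where y: "coord_eval \<theta> y = inverse (coord_eval \<theta> x)"
    using assms(4) unfolding ring_of_integers_def by (auto elim: cubic_field_coords)
  with \<open>coord_eval \<theta> x > 0\<close> have "coord_eval \<theta> (coord_mult (of_int p) (of_int q) x y) = coord_eval \<theta> (1, 0, 0)"
    by (simp add: coord_eval_mult[OF theta_cubed])
  then have "coord_mult (of_int p) (of_int q) x y = (1, 0, 0)"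
    by (rule coord_eval_inject)
  then have "?N x * ?N y = 1"
    using norm_form_mult[of x y] by simp
  moreover obtain i j where "?N x = of_int i" "?N y = of_int j"
    using norm_form_in_Ints_if_algebraic_int[OF assms(1,2)] assms(3,4) y by (metis Ints_cases)
  ultimately have "?N x = 1 \<or> ?N x = -1"
    by (metis of_int_1 of_int_eq_iff of_int_minus of_int_mult zmult_eq_1_iff)
  moreover have "of_rat (?N x) \<ge> (0::real)"
    using \<open>coord_eval \<theta> x > 0\<close> by (simp flip: norm_form_eq)
  ultimately show ?thesis
    by (auto simp: norm_form_eq)
qed

lemma last_coord_bounds:
  assumes "d > 0" and "coord_eval \<theta> (u, v, w) = \<Lambda>" and "\<Lambda> > 0"
    and "(cmod (coord_eval conj_root (u, v, w)))^2 = 1 / \<Lambda>"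
    and "t > 0" and "t^2 = \<Lambda>" and "t^3 > 2 * (1 + sqrt 2) * C1 p \<theta>"
  shows "real d * of_rat w > 0 \<and> C2 p d \<theta> / 2 * t < sqrt (real d * of_rat w)
    \<and> sqrt (real d * of_rat w) < 3 * C2 p d \<theta> / 2 * t"
proof (rule sqrt_last_coord_bounds[OF \<open>d > 0\<close> discriminant_pos \<open>t > 0\<close> \<open>t^2 = \<Lambda>\<close>])
  have "(sqrt (3 * \<theta>^2 - 4 * of_int p))^2 = 3 * \<theta>^2 - 4 * of_int p"
    using discriminant_pos by simp
  then have conj_norm: "(of_rat u - of_rat v * \<theta> / 2 + of_rat w * (of_int p - \<theta>^2 / 2))^2
      + (3 * \<theta>^2 - 4 * of_int p) / 4 * (of_rat v - of_rat w * \<theta>)^2 = 1 / \<Lambda>"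
    using assms(4) unfolding coord_eval_conj_root cmod_power2 by (simp add: power_mult_distrib power_divide)
  have "4 \<le> 2 * (1 + sqrt 2)"
    by simp
  from power_mono[OF this, of 2] have "16 * (C1 p \<theta>)^2 \<le> (2 * (1 + sqrt 2))^2 * (C1 p \<theta>)^2"
    by (intro mult_right_mono) simp_all
  also have "\<dots> = (2 * (1 + sqrt 2) * C1 p \<theta>)^2"
    by (simp add: power_mult_distrib)
  also have "\<dots> < (t^3)^2"
    using assms(7) by (intro power_strict_mono) (simp_all add: C1_def le_max_iff_disj)
  also have "\<dots> = \<Lambda>^3"
    unfolding \<open>t^2 = \<Lambda>\<close>[symmetric] by (simp flip: power_mult)
  finally have "16 * (C1 p \<theta>)^2 < \<Lambda>^3" .
  then show "\<bar>of_rat w * (3 * \<theta>^2 - of_int p) - \<Lambda>\<bar> < 3 / 4 * \<Lambda>"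
    using last_coord_close_to_value[OF discriminant_pos \<open>\<Lambda> > 0\<close> _ conj_norm] assms(2) by simp
qed

end

theorem mainTheorem11:
  fixes p q :: int and \<theta> lam :: real and d n :: nat and a b c :: "nat \<Rightarrow> rat"
  assumes irr: "irreducible ([:- of_int q, - of_int p, 0, 1:] :: rat poly)"
    and root: "\<theta>^3 - of_int p * \<theta> - of_int q = 0"
    and unique_real_root: "\<forall>x::real. x^3 - of_int p * x - of_int q = 0 \<longrightarrow> x = \<theta>"
    and d_pos: "d > 0"
    and OK_sub: "ring_of_integers \<theta> \<subseteq> scaled_order d \<theta>"
    and lam_OK: "lam \<in> ring_of_integers \<theta>"
    and lam_unit: "inverse lam \<in> ring_of_integers \<theta>"
    and lam_gt: "lam > 1"
    and abc: "\<forall>m\<ge>1. of_rat (a m) + of_rat (b m) * \<theta> + of_rat (c m) * \<theta>^2 = lam ^ m"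
    and n_pos: "n \<ge> 1"
    and n_large: "lam powr (3 * real n / 2) > 2 * (1 + sqrt 2) * C1 p \<theta>"
  shows "real d * of_rat (c n) > 0 \<and>
         C2 p d \<theta> / 2 * lam powr (real n / 2) < sqrt (real d * of_rat (c n)) \<and>
         sqrt (real d * of_rat (c n)) < 3 * C2 p d \<theta> / 2 * lam powr (real n / 2)"
proof -
  interpret real_cubic p q \<theta>
    using irr root unique_real_root by unfold_locales
  obtain L where L: "coord_eval \<theta> L = lam"
    using lam_OK unfolding ring_of_integers_def by (auto elim: cubic_field_coords)
  have "lam * (cmod (coord_eval conj_root L))^2 = 1"
    using unit_conj_norm[OF d_pos OK_sub, of L] lam_OK lam_unit lam_gt unfolding L by simp
  then have unit: "(cmod (coord_eval conj_root L))^2 = 1 / lam"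
    using lam_gt by (simp add: field_simps)
  have "(a n, b n, c n) = coord_pow (of_int p) (of_int q) L n"
    using abc n_pos by (intro coord_eval_inject) (simp add: coord_eval_pow[OF theta_cubed] L)
  then have "(cmod (coord_eval conj_root (a n, b n, c n)))^2 = ((cmod (coord_eval conj_root L))^2) ^ n"
    by (simp add: coord_eval_pow[OF conj_root_cubed] norm_power flip: power_mult) (simp add: mult.commute)
  also have "\<dots> = 1 / lam ^ n"
    unfolding unit by (simp add: power_one_over)
  finally have conj_norm: "(cmod (coord_eval conj_root (a n, b n, c n)))^2 = 1 / lam ^ n" .
  have t_sq: "(lam powr (real n / 2))^2 = lam ^ n"
    using lam_gt by (simp add: powr_powr powr_realpow flip: powr_numeral)
  have t_cube: "(lam powr (real n / 2))^3 = lam powr (3 * real n / 2)"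
    using lam_gt by (simp add: powr_powr mult.commute flip: powr_numeral)
  show ?thesis
    using last_coord_bounds[OF d_pos _ _ conj_norm _ t_sq] abc n_pos lam_gt n_large t_cube by simp
qed

end
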